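(* Let $n\ge1$, let $K$ be the uniform Kasteleyn matrix of the Aztec diamond of size $n$, $G_n(\mathtt{w},\mathtt{b})=\sum_{x\in\mathtt{W},y\in\mathtt{B}}K^{-1}(x,y)w_1^{x_1}w_2^{x_2}b_1^{y_1}b_2^{y_2}$, and for $k,l\in\{0,1\}$ $$H^{k,l}_n(\mathtt{w},\mathtt{b})=\sum_{\substack{1\le x_1\le 2n-1,\ x_1\text{ odd}\\1\le y_2\le 2n-1,\ y_2\text{ odd}}}K^{-1}((x_1,2nk),(2nl,y_2))\,w_1^{x_1}w_2^{2nk}b_1^{2nl}b_2^{y_2}.$$ Then, writing $H^{k,l}_n=H^{k,l}_n(\mathtt{w},\mathtt{b})$ and $C(r_1,r_2)=1+r_1^2r_2^2+\mathrm{i}(r_1^2+r_2^2)$, $$\begin{aligned}G_n(\mathtt{w},\mathtt{b})=&\ \frac{w_1w_2^2b_2f_{n+1}(w_1^2b_1^2)f_n(w_2^2b_2^2)}{C(w_1,w_2)}\\&+(1+\mathrm{i}w_1^2)\frac{(1+\mathrm{i}b_2^2)H^{0,0}_n+b_1^2\big(b_2w_1f_n(b_1^2w_1^2)+(\mathrm{i}+b_2^2)H^{0,1}_n\big)}{C(w_1,w_2)C(b_1,b_2)}\\&+(\mathrm{i}+w_1^2)w_2^2\frac{b_1^2b_2^{2n+1}w_1w_2^{2n}f_n(b_1^2w_1^2)+(1+\mathrm{i}b_2^2)H^{1,0}_n+b_1^2(\mathrm{i}+b_2^2)H^{1,1}_n}{C(w_1,w_2)C(b_1,b_2)}.\end{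aligned}$$
   Context: $\mathrm{i}=\sqrt{-1}$. $\mathtt{W}=\{(x_1,x_2): x_1\text{ odd},\ x_2\text{ even},\ 1\le x_1\le 2n-1,\ 0\le x_2\le 2n\}$, $\mathtt{B}=\{(x_1,x_2): x_1\text{ even},\ x_2\text{ odd},\ 0\le x_1\le 2n,\ 1\le x_2\le 2n-1\}$, $e_1=(1,1)$, $e_2=(-1,1)$. The uniform Kasteleyn matrix has rows indexed by $\mathtt{B}$, columns by $\mathtt{W}$, and $K(x,y)=1$ if $x-y=\pm e_1$, $K(x,y)=\mathrm{i}$ if $x-y=\pm e_2$, $0$ otherwise. $f_n(t)=(1-t^n)/(1-t)$. *)

theory Defs
  imports Complex_Main
begin

definition Wset :: "nat \<Rightarrow> (int \<times> int) set" where
  "Wset n = {(x1, x2). odd x1 \<and> even x2 \<and> 1 \<le> x1 \<and> x1 \<le> 2 * int n - 1 \<and> 0 \<le> x2 \<and> x2 \<le> 2 * int n}"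

definition Bset :: "nat \<Rightarrow> (int \<times> int) set" where
  "Bset n = {(x1, x2). even x1 \<and> odd x2 \<and> 0 \<le> x1 \<and> x1 \<le> 2 * int n \<and> 1 \<le> x2 \<and> x2 \<le> 2 * int n - 1}"

definition Kast :: "nat \<Rightarrow> int \<times> int \<Rightarrow> int \<times> int \<Rightarrow> complex" where
  "Kast n x y =
     (if x \<in> Bset n \<and> y \<in> Wset n then
        (let d = (fst x - fst y, snd x - snd y) in
         if d = (1, 1) \<or> d = (-1, -1) then 1
         else if d = (-1, 1) \<or> d = (1, -1) then \<i>
         else 0)
      else 0)"

definition is_Kinv :: "nat \<Rightarrow> (int \<times> int \<Rightarrow> int \<times> int \<Rightarrow> complex) \<Rightarrow> bool" where
  "is_Kinv n M \<longleftrightarrow>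
     (\<forall>x y. (x \<notin> Wset n \<or> y \<notin> Bset n) \<longrightarrow> M x y = 0) \<and>
     (\<forall>x\<in>Wset n. \<forall>x'\<in>Wset n. (\<Sum>y\<in>Bset n. M x y * Kast n y x') = (if x = x' then 1 else 0)) \<and>
     (\<forall>y\<in>Bset n. \<forall>y'\<in>Bset n. (\<Sum>x\<in>Wset n. Kast n y x * M x y') = (if y = y' then 1 else 0))"

definition Kinv :: "nat \<Rightarrow> int \<times> int \<Rightarrow> int \<times> int \<Rightarrow> complex" where
  "Kinv n = (THE M. is_Kinv n M)"

text \<open>f_n(t) = (1 - t^n)/(1 - t), as the polynomial 1 + t + ... + t^(n-1).\<close>
definition fpoly :: "nat \<Rightarrow> complex \<Rightarrow> complex" where
  "fpoly n t = (\<Sum>k<n. t ^ k)"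

definition Cfun :: "complex \<Rightarrow> complex \<Rightarrow> complex" where
  "Cfun r1 r2 = 1 + r1^2 * r2^2 + \<i> * (r1^2 + r2^2)"

definition Gn :: "nat \<Rightarrow> complex \<Rightarrow> complex \<Rightarrow> complex \<Rightarrow> complex \<Rightarrow> complex" where
  "Gn n w1 w2 b1 b2 =
     (\<Sum>x\<in>Wset n. \<Sum>y\<in>Bset n. Kinv n x y * w1 ^ nat (fst x) * w2 ^ nat (snd x)
                                  * b1 ^ nat (fst y) * b2 ^ nat (snd y))"

definition Hn :: "nat \<Rightarrow> nat \<Rightarrow> nat \<Rightarrow> complex \<Rightarrow> complex \<Rightarrow> complex \<Rightarrow> complex \<Rightarrow> complex" where
  "Hn n k l w1 w2 b1 b2 =
     (\<Sum>x1\<in>{x1::int. odd x1 \<and> 1 \<le> x1 \<and> x1 \<le> 2 * int n - 1}.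
      \<Sum>y2\<in>{y2::int. odd y2 \<and> 1 \<le> y2 \<and> y2 \<le> 2 * int n - 1}.
        Kinv n (x1, 2 * int n * int k) (2 * int n * int l, y2)
          * w1 ^ nat x1 * w2 ^ (2 * n * k) * b1 ^ (2 * n * l) * b2 ^ nat y2)"

end

theory Submission
  imports Defs "HOL-Computational_Algebra.Polynomial" "Jordan_Normal_Form.Determinant"
begin

text \<open>
  Write \<open>mon b\<^sub>1 b\<^sub>2 y\<close> for \<open>b\<^sub>1^y\<^sub>1 b\<^sub>2^y\<^sub>2\<close>. For a black vertex \<open>y\<close> away from the
  columns \<open>y\<^sub>1 = 0\<close> and \<open>y\<^sub>1 = 2n\<close>, the four neighbours give
  \<open>b\<^sub>1 b\<^sub>2 (K mon) y = C(b\<^sub>1, b\<^sub>2) mon y\<close>; on those two columns two neighbours are missing and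
  the identity acquires a correction term. The same holds for white vertices and the rows
  \<open>x\<^sub>2 = 0\<close>, \<open>x\<^sub>2 = 2n\<close>. Substituting these identities into the bilinear form
  \<open>\<Sum> u(x) K\<inverse>(x,y) v(y)\<close> and using \<open>K\<inverse> K = K K\<inverse> = I\<close> expresses \<open>C(b\<^sub>1, b\<^sub>2) G\<^sub>n\<close>
  through the restrictions of \<open>G\<^sub>n\<close> to the two boundary columns, and these in turn through
  the corner sums \<open>H\<^sub>n\<close>; what remains are geometric series.

  That \<open>K\<close> is invertible comes from reading a kernel vector row by row as polynomials
  \<open>P\<^sub>0, \<dots>, P\<^sub>n\<close> of degree \<open>< n\<close>: the kernel equations say \<open>(1 + \<i> z) P\<^sub>j\<^sub>+\<^sub>1 = -(\<i> + z) P\<^sub>j\<close>,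
  so \<open>(1 + \<i> z)\<^sup>n\<close> divides \<open>P\<^sub>0\<close>, forcing \<open>P\<^sub>0 = 0\<close> and then every \<open>P\<^sub>j = 0\<close>.
\<close>

section \<open>Vertex sets and the Kasteleyn matrix\<close>

lemma Wset_eq_image: "Wset n = (\<lambda>(a, j). (2 * int a + 1, 2 * int j)) ` ({..<n} \<times> {..n})"
proof (intro Set.set_eqI iffI)
  fix x assume "x \<in> Wset n"
  then obtain a j where "x = (2 * a + 1, 2 * j)" "0 \<le> a" "a < int n" "0 \<le> j" "j \<le> int n"
    by (auto simp: Wset_def elim!: oddE evenE)
  then show "x \<in> (\<lambda>(a, j). (2 * int a + 1, 2 * int j)) ` ({..<n} \<times> {..n})"
    by (intro image_eqI[of _ _ "(nat a, nat j)"]) auto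
qed (auto simp: Wset_def)

lemma Bset_eq_image: "Bset n = (\<lambda>(c, j). (2 * int c, 2 * int j + 1)) ` ({..n} \<times> {..<n})"
proof (intro Set.set_eqI iffI)
  fix y assume "y \<in> Bset n"
  then obtain c j where "y = (2 * c, 2 * j + 1)" "0 \<le> c" "c \<le> int n" "0 \<le> j" "j < int n"
    by (auto simp: Bset_def elim!: oddE evenE)
  then show "y \<in> (\<lambda>(c, j). (2 * int c, 2 * int j + 1)) ` ({..n} \<times> {..<n})"
    by (intro image_eqI[of _ _ "(nat c, nat j)"]) auto
qed (auto simp: Bset_def)

lemma finite_Wset [simp]: "finite (Wset n)"
  by (simp add: Wset_eq_image)

lemma finite_Bset [simp]: "finite (Bset n)"
  by (simp add: Bset_eq_image)

lemma inj_on_Wset_param: "inj_on (\<lambda>(a::nat, j::nat). (2 * int a + 1, 2 * int j)) A"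
  by (auto simp: inj_on_def)

lemma inj_on_Bset_param: "inj_on (\<lambda>(c::nat, j::nat). (2 * int c, 2 * int j + 1)) A"
  by (auto simp: inj_on_def)

lemma sum_Wset: "(\<Sum>x\<in>Wset n. f x) = (\<Sum>a<n. \<Sum>j\<le>n. f (2 * int a + 1, 2 * int j))"
  unfolding Wset_eq_image sum.reindex[OF inj_on_Wset_param] sum.cartesian_product
  by (simp add: split_def)

lemma sum_Bset: "(\<Sum>y\<in>Bset n. f y) = (\<Sum>c\<le>n. \<Sum>j<n. f (2 * int c, 2 * int j + 1))"
  unfolding Bset_eq_image sum.reindex[OF inj_on_Bset_param] sum.cartesian_product
  by (simp add: split_def)

lemma card_Wset_eq_card_Bset: "card (Wset n) = card (Bset n)"
  by (simp add: Wset_eq_image Bset_eq_image card_image[OF inj_on_Wset_param]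
      card_image[OF inj_on_Bset_param] card_cartesian_product)

lemma Kast_eq_sum_of_neighbours:
  assumes "y \<in> Bset n" "x \<in> Wset n"
  shows "Kast n y x = of_bool (x = (fst y - 1, snd y - 1)) + of_bool (x = (fst y + 1, snd y + 1))
     + \<i> * of_bool (x = (fst y - 1, snd y + 1)) + \<i> * of_bool (x = (fst y + 1, snd y - 1))"
  using assms by (cases x; cases y; auto simp: Kast_def Let_def)

lemma sum_Kast_row:
  assumes y: "y \<in> Bset n"
  shows "(\<Sum>x\<in>Wset n. Kast n y x * f x) =
     (if fst y \<noteq> 0 then f (fst y - 1, snd y - 1) + \<i> * f (fst y - 1, snd y + 1) else 0)
   + (if fst y \<noteq> 2 * int n then f (fst y + 1, snd y + 1) + \<i> * f (fst y + 1, snd y - 1) else 0)"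
proof -
  let ?at = "\<lambda>p g. \<Sum>x\<in>Wset n. if x = p then g x else 0"
  have "Kast n y x * f x = (if x = (fst y - 1, snd y - 1) then f x else 0)
      + (if x = (fst y + 1, snd y + 1) then f x else 0) + (if x = (fst y - 1, snd y + 1) then \<i> * f x else 0)
      + (if x = (fst y + 1, snd y - 1) then \<i> * f x else 0)" if "x \<in> Wset n" for x
    using that by (simp add: Kast_eq_sum_of_neighbours[OF y])
  then have "(\<Sum>x\<in>Wset n. Kast n y x * f x) = ?at (fst y - 1, snd y - 1) f + ?at (fst y + 1, snd y + 1) f
      + ?at (fst y - 1, snd y + 1) (\<lambda>x. \<i> * f x) + ?at (fst y + 1, snd y - 1) (\<lambda>x. \<i> * f x)"
    by (simp only: sum.distrib cong: sum.cong)
  moreover have "((fst y - 1, snd y - 1) \<in> Wset n) = (fst y \<noteq> 0)"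
    "((fst y - 1, snd y + 1) \<in> Wset n) = (fst y \<noteq> 0)"
    "((fst y + 1, snd y + 1) \<in> Wset n) = (fst y \<noteq> 2 * int n)"
    "((fst y + 1, snd y - 1) \<in> Wset n) = (fst y \<noteq> 2 * int n)"
    using y by (cases y; auto simp: Wset_def Bset_def; presburger)+
  ultimately show ?thesis
    by (simp only: sum.delta' finite_Wset) simp
qed

lemma sum_Kast_col:
  assumes x: "x \<in> Wset n"
  shows "(\<Sum>y\<in>Bset n. f y * Kast n y x) =
     (if snd x \<noteq> 0 then f (fst x - 1, snd x - 1) + \<i> * f (fst x + 1, snd x - 1) else 0)
   + (if snd x \<noteq> 2 * int n then f (fst x + 1, snd x + 1) + \<i> * f (fst x - 1, snd x + 1) else 0)"
proof -
  let ?at = "\<lambda>p g. \<Sum>y\<in>Bset n. if y = p then g y else 0"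
  have "f y * Kast n y x = (if y = (fst x + 1, snd x + 1) then f y else 0)
      + (if y = (fst x - 1, snd x - 1) then f y else 0) + (if y = (fst x + 1, snd x - 1) then \<i> * f y else 0)
      + (if y = (fst x - 1, snd x + 1) then \<i> * f y else 0)" if "y \<in> Bset n" for y
    using that x by (cases x; cases y) (auto simp: Kast_eq_sum_of_neighbours)
  then have "(\<Sum>y\<in>Bset n. f y * Kast n y x) = ?at (fst x + 1, snd x + 1) f + ?at (fst x - 1, snd x - 1) f
      + ?at (fst x + 1, snd x - 1) (\<lambda>y. \<i> * f y) + ?at (fst x - 1, snd x + 1) (\<lambda>y. \<i> * f y)"
    by (simp only: sum.distrib cong: sum.cong)
  moreover have "((fst x - 1, snd x - 1) \<in> Bset n) = (snd x \<noteq> 0)"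
    "((fst x + 1, snd x - 1) \<in> Bset n) = (snd x \<noteq> 0)"
    "((fst x + 1, snd x + 1) \<in> Bset n) = (snd x \<noteq> 2 * int n)"
    "((fst x - 1, snd x + 1) \<in> Bset n) = (snd x \<noteq> 2 * int n)"
    using x by (cases x; auto simp: Wset_def Bset_def; presburger)+
  ultimately show ?thesis
    by (simp only: sum.delta' finite_Bset) (simp add: add_ac)
qed

section \<open>Invertibility of the Kasteleyn matrix\<close>

lemma order_power: "p \<noteq> 0 \<Longrightarrow> order a (p ^ k) = k * order a p"
  by (induction k) (simp_all add: order_mult)

lemma poly_chain_vanishes:
  fixes P :: "nat \<Rightarrow> complex poly"
  assumes step: "\<And>j. j < n \<Longrightarrow> [:1, \<i>:] * P (Suc j) + [:\<i>, 1:] * P j = 0"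
    and small: "\<And>c. n \<le> c \<Longrightarrow> coeff (P 0) c = 0"
    and "j \<le> n"
  shows "P j = 0"
proof -
  let ?\<alpha> = "[:1, \<i>:] :: complex poly" and ?\<beta> = "- [:\<i>, 1:] :: complex poly"
  have step': "?\<alpha> * P (Suc j) = ?\<beta> * P j" if "j < n" for j
    using step[OF that] by (metis eq_neg_iff_add_eq_0 minus_mult_left)
  have power: "?\<alpha> ^ j * P j = ?\<beta> ^ j * P 0" if "j \<le> n" for j
    using that
  proof (induction j)
    case (Suc j)
    have "?\<alpha> ^ Suc j * P (Suc j) = ?\<alpha> ^ j * (?\<alpha> * P (Suc j))" by (simp only: power_Suc2 mult.assoc)
    also have "\<dots> = ?\<beta> * (?\<alpha> ^ j * P j)" using Suc by (simp only: step' mult.left_commute)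
    also have "\<dots> = ?\<beta> ^ Suc j * P 0" using Suc by (simp only: power_Suc mult.assoc)
    finally show ?case .
  qed simp
  have "P 0 = 0"
  proof (rule ccontr)
    assume P0: "P 0 \<noteq> 0"
    \<comment> \<open>the root \<open>\<i>\<close> of \<open>1 + \<i>z\<close> has multiplicity at least \<open>n\<close> on the left,
      but not on the right\<close>
    have ne: "?\<beta> ^ n * P 0 \<noteq> 0" using P0 by simp
    have "?\<alpha> ^ n * P n \<noteq> 0" using ne power[of n] by simp
    moreover have "order \<i> ?\<alpha> \<noteq> 0" using order_root[of ?\<alpha> \<i>] by simp
    ultimately have "n \<le> order \<i> (?\<alpha> ^ n * P n)"
      by (simp add: order_mult order_power trans_le_add1)
    also have "\<dots> = order \<i> (P 0)"
      using ne power[of n] by (simp add: order_mult order_power order_0I)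
    also have "\<dots> \<le> degree (P 0)" by (rule order_degree[OF P0])
    also have "\<dots> < n"
      using P0 small by (metis leading_coeff_0_iff not_le_imp_less)
    finally show False by simp
  qed
  then show ?thesis
    using \<open>j \<le> n\<close>
  proof (induction j)
    case (Suc j)
    then have "?\<alpha> * P (Suc j) = 0" using step'[of j] by simp
    then show ?case by (metis mult_eq_0_iff pCons_eq_0_iff zero_neq_one)
  qed
qed

lemma Kast_kernel_trivial:
  assumes ker: "\<And>y. y \<in> Bset n \<Longrightarrow> (\<Sum>x\<in>Wset n. Kast n y x * v x) = 0"
    and x: "x \<in> Wset n"
  shows "v x = 0"
proof -
  define P where "P j = (\<Sum>a<n. monom (v (2 * int a + 1, 2 * int j)) a)" for j
  have coeff_P: "coeff (P j) c = (if c < n then v (2 * int c + 1, 2 * int j) else 0)" for j c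
    by (simp add: P_def coeff_sum coeff_monom)
  have step: "[:1, \<i>:] * P (Suc j) + [:\<i>, 1:] * P j = 0" if j: "j < n" for j
  proof (rule poly_eqI)
    fix c
    show "coeff ([:1, \<i>:] * P (Suc j) + [:\<i>, 1:] * P j) c = coeff 0 c"
    proof (cases "c \<le> n")
      case True
      have y: "(2 * int c, 2 * int j + 1) \<in> Bset n" using True j by (simp add: Bset_def)
      from ker[OF y] show ?thesis
        unfolding sum_Kast_row[OF y] using True j
        by (cases c) (auto simp: mult_pCons_left coeff_P algebra_simps)
    qed (cases c; simp add: mult_pCons_left coeff_P)
  qed
  have "P j = 0" if "j \<le> n" for j
    using that by (intro poly_chain_vanishes[where P = P and n = n] step) (simp_all add: coeff_P)
  then show ?thesis
    using x coeff_P by (auto simp: Wset_eq_image) (metis coeff_0)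
qed

lemma inverse_of_trivial_kernel_nat:
  fixes K :: "nat \<Rightarrow> nat \<Rightarrow> 'a :: field"
  assumes ker: "\<And>v j. (\<And>i. i < N \<Longrightarrow> (\<Sum>j<N. K i j * v j) = 0) \<Longrightarrow> j < N \<Longrightarrow> v j = 0"
  obtains M where "\<And>i i'. i < N \<Longrightarrow> i' < N \<Longrightarrow> (\<Sum>j<N. M i j * K j i') = of_bool (i = i')"
    and "\<And>i i'. i < N \<Longrightarrow> i' < N \<Longrightarrow> (\<Sum>j<N. K i j * M j i') = of_bool (i = i')"
proof -
  define A where "A = mat N N (\<lambda>(i, j). K i j)"
  have A: "A \<in> carrier_mat N N" by (simp add: A_def)
  have "det A \<noteq> 0"
  proof
    assume "det A = 0"
    then obtain v where v: "v \<in> carrier_vec N" "v \<noteq> 0\<^sub>v N" "A *\<^sub>v v = 0\<^sub>v N"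
      using det_0_iff_vec_prod_zero[OF A] by blast
    have "(\<Sum>j<N. K i j * v $ j) = 0" if "i < N" for i
    proof -
      have "(\<Sum>j<N. K i j * v $ j) = (A *\<^sub>v v) $ i"
        using v(1) that by (simp add: A_def mult_mat_vec_def scalar_prod_def atLeast0LessThan)
      then show ?thesis using v(3) that by simp
    qed
    then have "v $ j = 0" if "j < N" for j
      using ker[of "\<lambda>j. v $ j"] that by blast
    then show False
      using v(1,2) by (metis carrier_vecD eq_vecI index_zero_vec)
  qed
  from det_non_zero_imp_unit[OF A this]
  obtain C where C: "C \<in> carrier_mat N N" "C * A = 1\<^sub>m N" "A * C = 1\<^sub>m N"
    by (auto simp: Units_def ring_mat_def)
  show ?thesis
  proof (rule that[of "\<lambda>i j. C $$ (i, j)"])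
    fix i i' assume "i < N" "i' < N"
    then show "(\<Sum>j<N. C $$ (i, j) * K j i') = of_bool (i = i')"
      using C(1) arg_cong[OF C(2), of "\<lambda>X. X $$ (i, i')"]
      by (simp add: A_def times_mat_def scalar_prod_def atLeast0LessThan)
  next
    fix i i' assume "i < N" "i' < N"
    then show "(\<Sum>j<N. K i j * C $$ (j, i')) = of_bool (i = i')"
      using C(1) arg_cong[OF C(3), of "\<lambda>X. X $$ (i, i')"]
      by (simp add: A_def times_mat_def scalar_prod_def atLeast0LessThan)
  qed
qed

lemma inverse_of_trivial_kernel:
  fixes K :: "'b \<Rightarrow> 'a \<Rightarrow> 'c :: field"
  assumes "finite W" "finite B" and card: "card W = card B"
    and ker: "\<And>v x. (\<And>y. y \<in> B \<Longrightarrow> (\<Sum>x\<in>W. K y x * v x) = 0) \<Longrightarrow> x \<in> W \<Longrightarrow> v x = 0"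
  obtains M where "\<And>x x'. x \<in> W \<Longrightarrow> x' \<in> W \<Longrightarrow> (\<Sum>y\<in>B. M x y * K y x') = of_bool (x = x')"
    and "\<And>y y'. y \<in> B \<Longrightarrow> y' \<in> B \<Longrightarrow> (\<Sum>x\<in>W. K y x * M x y') = of_bool (y = y')"
proof -
  define N where "N = card W"
  obtain gw where gw: "bij_betw gw {0..<N} W" using ex_bij_betw_nat_finite[OF \<open>finite W\<close>] N_def by blast
  obtain gb where gb: "bij_betw gb {0..<N} B" using ex_bij_betw_nat_finite[OF \<open>finite B\<close>] N_def card by metis
  define fw where "fw = the_inv_into {0..<N} gw"
  define fb where "fb = the_inv_into {0..<N} gb"
  have fw: "bij_betw fw W {0..<N}" and fb: "bij_betw fb B {0..<N}"
    using gw gb by (simp_all add: fw_def fb_def bij_betw_the_inv_into)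
  have gw_fw: "x \<in> W \<Longrightarrow> gw (fw x) = x" and gb_fb: "y \<in> B \<Longrightarrow> gb (fb y) = y" for x y
    using gw gb by (simp_all add: fw_def fb_def f_the_inv_into_f_bij_betw)
  have fw_gw: "i < N \<Longrightarrow> fw (gw i) = i" and fb_gb: "i < N \<Longrightarrow> fb (gb i) = i" for i
    using gw gb by (auto simp: fw_def fb_def bij_betw_def the_inv_into_f_f)
  have sum_W: "(\<Sum>x\<in>W. g x) = (\<Sum>i<N. g (gw i))" and sum_B: "(\<Sum>y\<in>B. h y) = (\<Sum>i<N. h (gb i))"
    for g h :: "_ \<Rightarrow> 'c"
    using sum.reindex_bij_betw[OF gw, of g] sum.reindex_bij_betw[OF gb, of h] by (simp_all add: atLeast0LessThan)
  have fw_lt: "x \<in> W \<Longrightarrow> fw x < N" and fb_lt: "y \<in> B \<Longrightarrow> fb y < N" for x y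
    using fw fb by (auto simp: bij_betw_def)
  have fw_eq: "x \<in> W \<Longrightarrow> x' \<in> W \<Longrightarrow> fw x = fw x' \<longleftrightarrow> x = x'"
    and fb_eq: "y \<in> B \<Longrightarrow> y' \<in> B \<Longrightarrow> fb y = fb y' \<longleftrightarrow> y = y'" for x x' y y'
    using fw fb by (auto simp: bij_betw_def inj_on_def)
  have ker_nat: "v j = 0"
    if v: "\<And>i. i < N \<Longrightarrow> (\<Sum>j<N. K (gb i) (gw j) * v j) = 0" and "j < N" for v j
  proof -
    have "(\<Sum>x\<in>W. K y x * v (fw x)) = 0" if "y \<in> B" for y
      using v[of "fb y"] that by (simp add: sum_W fw_gw gb_fb fb_lt)
    then have "v (fw (gw j)) = 0"
      using ker[of "\<lambda>x. v (fw x)" "gw j"] gw \<open>j < N\<close> by (auto simp: bij_betw_def)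
    then show "v j = 0" using fw_gw \<open>j < N\<close> by simp
  qed
  obtain M where M: "\<And>i i'. i < N \<Longrightarrow> i' < N \<Longrightarrow> (\<Sum>j<N. M i j * K (gb j) (gw i')) = of_bool (i = i')"
    "\<And>i i'. i < N \<Longrightarrow> i' < N \<Longrightarrow> (\<Sum>j<N. K (gb i) (gw j) * M j i') = of_bool (i = i')"
    using inverse_of_trivial_kernel_nat[of N "\<lambda>i j. K (gb i) (gw j)"] ker_nat by blast
  show ?thesis
  proof (rule that[of "\<lambda>x y. M (fw x) (fb y)"])
    fix x x' assume "x \<in> W" "x' \<in> W"
    then show "(\<Sum>y\<in>B. M (fw x) (fb y) * K y x') = of_bool (x = x')"
      using M(1)[of "fw x" "fw x'"] by (simp add: sum_B fb_gb gw_fw fw_lt fw_eq)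
  next
    fix y y' assume "y \<in> B" "y' \<in> B"
    then show "(\<Sum>x\<in>W. K y x * M (fw x) (fb y')) = of_bool (y = y')"
      using M(2)[of "fb y" "fb y'"] by (simp add: sum_W fw_gw gb_fb fb_lt fb_eq)
  qed
qed

lemma Kinv_unique:
  assumes "is_Kinv n M" "is_Kinv n M'"
  shows "M = M'"
proof (intro ext)
  fix x y
  show "M x y = M' x y"
  proof (cases "x \<in> Wset n \<and> y \<in> Bset n")
    case True
    have left: "(\<Sum>y'\<in>Bset n. M' x y' * Kast n y' x') = of_bool (x = x')" if "x' \<in> Wset n" for x'
      using assms(2) True that by (simp add: is_Kinv_def)
    have right: "(\<Sum>x'\<in>Wset n. Kast n y' x' * M x' y) = of_bool (y' = y)" if "y' \<in> Bset n" for y'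
      using assms(1) True that by (simp add: is_Kinv_def)
    have "M x y = (\<Sum>x'\<in>Wset n. of_bool (x = x') * M x' y)"
      using True by simp
    also have "\<dots> = (\<Sum>x'\<in>Wset n. (\<Sum>y'\<in>Bset n. M' x y' * Kast n y' x') * M x' y)"
      by (simp add: left)
    also have "\<dots> = (\<Sum>y'\<in>Bset n. M' x y' * (\<Sum>x'\<in>Wset n. Kast n y' x' * M x' y))"
      by (simp add: sum_distrib_left sum_distrib_right mult.assoc sum.swap[where B = "Bset n"])
    also have "\<dots> = (\<Sum>y'\<in>Bset n. M' x y' * of_bool (y' = y))"
      by (simp add: right)
    also have "\<dots> = M' x y"
      using True by simp
    finally show ?thesis .
  next
    case False
    then show ?thesis
      using assms unfolding is_Kinv_def by (metis (no_types, lifting))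
  qed
qed

lemma is_Kinv_Kinv: "is_Kinv n (Kinv n)"
proof -
  obtain M where M:
    "\<And>x x'. x \<in> Wset n \<Longrightarrow> x' \<in> Wset n \<Longrightarrow> (\<Sum>y\<in>Bset n. M x y * Kast n y x') = of_bool (x = x')"
    "\<And>y y'. y \<in> Bset n \<Longrightarrow> y' \<in> Bset n \<Longrightarrow> (\<Sum>x\<in>Wset n. Kast n y x * M x y') = of_bool (y = y')"
    using inverse_of_trivial_kernel[OF finite_Wset finite_Bset card_Wset_eq_card_Bset, where K = "Kast n"]
      Kast_kernel_trivial by blast
  have "is_Kinv n (\<lambda>x y. if x \<in> Wset n \<and> y \<in> Bset n then M x y else 0)"
    using M by (simp add: is_Kinv_def cong: sum.cong)
  then have "\<exists>!M. is_Kinv n M"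
    using Kinv_unique by blast
  then show ?thesis
    unfolding Kinv_def by (rule theI')
qed

lemma Kinv_Kast:
  "x \<in> Wset n \<Longrightarrow> x' \<in> Wset n \<Longrightarrow> (\<Sum>y\<in>Bset n. Kinv n x y * Kast n y x') = of_bool (x = x')"
  using is_Kinv_Kinv by (simp add: is_Kinv_def)

lemma Kast_Kinv:
  "y \<in> Bset n \<Longrightarrow> y' \<in> Bset n \<Longrightarrow> (\<Sum>x\<in>Wset n. Kast n y x * Kinv n x y') = of_bool (y = y')"
  using is_Kinv_Kinv by (simp add: is_Kinv_def)

section \<open>The generating function of the inverse\<close>

definition mon :: "complex \<Rightarrow> complex \<Rightarrow> int \<times> int \<Rightarrow> complex" where
  "mon a b x = a ^ nat (fst x) * b ^ nat (snd x)"

definition row_mon :: "nat \<Rightarrow> complex \<Rightarrow> complex \<Rightarrow> int \<times> int \<Rightarrow> complex" where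
  "row_mon m a b x = of_bool (snd x = 2 * int m) * mon a b x"

definition col_mon :: "nat \<Rightarrow> complex \<Rightarrow> complex \<Rightarrow> int \<times> int \<Rightarrow> complex" where
  "col_mon m a b y = of_bool (fst y = 2 * int m) * mon a b y"

lemma Kast_row_mon:
  assumes y: "y \<in> Bset n"
  shows "b1 * b2 * (\<Sum>x\<in>Wset n. Kast n y x * mon b1 b2 x) = Cfun b1 b2 * mon b1 b2 y
    - (1 + \<i> * b2^2) * col_mon 0 b1 b2 y - (b1^2 * b2^2 + \<i> * b1^2) * col_mon n b1 b2 y"
proof -
  obtain c j where cj: "y = (2 * int c, 2 * int j + 1)" "c \<le> n" "j < n"
    using y by (auto simp: Bset_eq_image)
  have "b1 * b2 * (\<Sum>x\<in>Wset n. Kast n y x * mon b1 b2 x)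
      = (if c \<noteq> 0 then (1 + \<i> * b2^2) * mon b1 b2 y else 0)
      + (if c \<noteq> n then (b1^2 * b2^2 + \<i> * b1^2) * mon b1 b2 y else 0)"
    using cj unfolding sum_Kast_row[OF y]
    by (cases c) (simp_all add: mon_def nat_add_distrib nat_mult_distrib power_add power2_eq_square
        power3_eq_cube algebra_simps)
  moreover have "n \<noteq> 0" using cj by simp
  ultimately show ?thesis using cj
    by (simp add: col_mon_def Cfun_def algebra_simps)
qed

lemma Kast_col_mon:
  assumes x: "x \<in> Wset n"
  shows "w1 * w2 * (\<Sum>y\<in>Bset n. mon w1 w2 y * Kast n y x) = Cfun w1 w2 * mon w1 w2 x
    - (1 + \<i> * w1^2) * row_mon 0 w1 w2 x - (w1^2 * w2^2 + \<i> * w2^2) * row_mon n w1 w2 x"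
proof -
  obtain a j where aj: "x = (2 * int a + 1, 2 * int j)" "a < n" "j \<le> n"
    using x by (auto simp: Wset_eq_image)
  have "w1 * w2 * (\<Sum>y\<in>Bset n. mon w1 w2 y * Kast n y x)
      = (if j \<noteq> 0 then (1 + \<i> * w1^2) * mon w1 w2 x else 0)
      + (if j \<noteq> n then (w1^2 * w2^2 + \<i> * w2^2) * mon w1 w2 x else 0)"
    using aj unfolding sum_Kast_col[OF x]
    by (cases j) (simp_all add: mon_def nat_add_distrib nat_mult_distrib power_add power2_eq_square
        power3_eq_cube algebra_simps)
  moreover have "n \<noteq> 0" using aj by simp
  ultimately show ?thesis using aj
    by (simp add: row_mon_def Cfun_def algebra_simps)
qed

definition Kinv_form :: "nat \<Rightarrow> (int \<times> int \<Rightarrow> complex) \<Rightarrow> (int \<times> int \<Rightarrow> complex) \<Rightarrow> complex" where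
  "Kinv_form n u v = (\<Sum>x\<in>Wset n. \<Sum>y\<in>Bset n. u x * Kinv n x y * v y)"

lemma Kinv_form_cong:
  "(\<And>x. x \<in> Wset n \<Longrightarrow> u x = u' x) \<Longrightarrow> (\<And>y. y \<in> Bset n \<Longrightarrow> v y = v' y)
    \<Longrightarrow> Kinv_form n u v = Kinv_form n u' v'"
  by (simp add: Kinv_form_def)

lemma Kinv_form_diff_left: "Kinv_form n (\<lambda>x. u x - u' x) v = Kinv_form n u v - Kinv_form n u' v"
  by (simp add: Kinv_form_def algebra_simps sum_subtractf)

lemma Kinv_form_diff_right: "Kinv_form n u (\<lambda>y. v y - v' y) = Kinv_form n u v - Kinv_form n u v'"
  by (simp add: Kinv_form_def algebra_simps sum_subtractf)

lemma Kinv_form_mult_left: "Kinv_form n (\<lambda>x. c * u x) v = c * Kinv_form n u v"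
  by (simp add: Kinv_form_def sum_distrib_left mult.assoc)

lemma Kinv_form_mult_right: "Kinv_form n u (\<lambda>y. c * v y) = c * Kinv_form n u v"
  by (simp add: Kinv_form_def sum_distrib_left mult.left_commute)

lemma Kinv_form_Kast_right:
  "Kinv_form n u (\<lambda>y. \<Sum>x'\<in>Wset n. Kast n y x' * f x') = (\<Sum>x\<in>Wset n. u x * f x)"
proof -
  have "Kinv_form n u (\<lambda>y. \<Sum>x'\<in>Wset n. Kast n y x' * f x')
      = (\<Sum>x\<in>Wset n. u x * (\<Sum>x'\<in>Wset n. (\<Sum>y\<in>Bset n. Kinv n x y * Kast n y x') * f x'))"
    by (simp add: Kinv_form_def sum_distrib_left sum_distrib_right mult_ac sum.swap[where A = "Bset n"])
  also have "\<dots> = (\<Sum>x\<in>Wset n. u x * f x)"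
    by (simp add: Kinv_Kast cong: sum.cong)
  finally show ?thesis .
qed

lemma Kinv_form_Kast_left:
  "Kinv_form n (\<lambda>x. \<Sum>y'\<in>Bset n. g y' * Kast n y' x) v = (\<Sum>y\<in>Bset n. g y * v y)"
proof -
  have "Kinv_form n (\<lambda>x. \<Sum>y'\<in>Bset n. g y' * Kast n y' x) v
      = (\<Sum>y\<in>Bset n. (\<Sum>y'\<in>Bset n. g y' * (\<Sum>x\<in>Wset n. Kast n y' x * Kinv n x y)) * v y)"
    by (simp add: Kinv_form_def sum_distrib_left sum_distrib_right mult_ac sum.swap[where A = "Wset n"])
  also have "\<dots> = (\<Sum>y\<in>Bset n. g y * v y)"
    by (simp add: Kast_Kinv cong: sum.cong)
  finally show ?thesis .
qed

lemma Kinv_form_mon_right: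
  "Cfun b1 b2 * Kinv_form n u (mon b1 b2)
    - (1 + \<i> * b2^2) * Kinv_form n u (col_mon 0 b1 b2)
    - (b1^2 * b2^2 + \<i> * b1^2) * Kinv_form n u (col_mon n b1 b2)
   = b1 * b2 * (\<Sum>x\<in>Wset n. u x * mon b1 b2 x)"
proof -
  have "b1 * b2 * (\<Sum>x\<in>Wset n. u x * mon b1 b2 x)
      = Kinv_form n u (\<lambda>y. b1 * b2 * (\<Sum>x\<in>Wset n. Kast n y x * mon b1 b2 x))"
    by (simp only: Kinv_form_mult_right Kinv_form_Kast_right)
  also have "\<dots> = Kinv_form n u (\<lambda>y. Cfun b1 b2 * mon b1 b2 y
      - (1 + \<i> * b2^2) * col_mon 0 b1 b2 y - (b1^2 * b2^2 + \<i> * b1^2) * col_mon n b1 b2 y)"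
    by (intro Kinv_form_cong refl Kast_row_mon)
  finally show ?thesis
    by (simp only: Kinv_form_diff_right Kinv_form_mult_right)
qed

lemma Kinv_form_mon_left:
  "Cfun w1 w2 * Kinv_form n (mon w1 w2) v
    - (1 + \<i> * w1^2) * Kinv_form n (row_mon 0 w1 w2) v
    - (w1^2 * w2^2 + \<i> * w2^2) * Kinv_form n (row_mon n w1 w2) v
   = w1 * w2 * (\<Sum>y\<in>Bset n. mon w1 w2 y * v y)"
proof -
  have "w1 * w2 * (\<Sum>y\<in>Bset n. mon w1 w2 y * v y)
      = Kinv_form n (\<lambda>x. w1 * w2 * (\<Sum>y\<in>Bset n. mon w1 w2 y * Kast n y x)) v"
    by (simp only: Kinv_form_mult_left Kinv_form_Kast_left)
  also have "\<dots> = Kinv_form n (\<lambda>x. Cfun w1 w2 * mon w1 w2 x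
      - (1 + \<i> * w1^2) * row_mon 0 w1 w2 x - (w1^2 * w2^2 + \<i> * w2^2) * row_mon n w1 w2 x) v"
    by (intro Kinv_form_cong refl Kast_col_mon)
  finally show ?thesis
    by (simp only: Kinv_form_diff_left Kinv_form_mult_left)
qed

lemma fpoly_Suc: "fpoly (Suc n) t = fpoly n t + t ^ n"
  by (simp add: fpoly_def)

lemma power_eq_one_minus_fpoly: "t ^ n = 1 - (1 - t) * fpoly n t"
proof -
  have "(1 - t) * fpoly n t = 1 - t ^ n"
  proof (induction n)
    case (Suc n)
    then show ?case by (simp only: fpoly_Suc distrib_left) (simp add: algebra_simps)
  qed (simp add: fpoly_def)
  then show ?thesis by simp
qed

lemma sum_Wset_mon_mon:
  "(\<Sum>x\<in>Wset n. mon w1 w2 x * mon b1 b2 x) = w1 * b1 * fpoly n (w1^2 * b1^2) * fpoly (Suc n) (w2^2 * b2^2)"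
proof -
  have "(\<Sum>x\<in>Wset n. mon w1 w2 x * mon b1 b2 x)
      = (\<Sum>a<n. \<Sum>j\<le>n. w1 * b1 * (w1^2 * b1^2) ^ a * (w2^2 * b2^2) ^ j)"
    by (simp add: sum_Wset mon_def nat_add_distrib nat_mult_distrib power_add power_mult power_mult_distrib mult_ac)
      (simp add: mult.commute flip: power_mult)
  also have "\<dots> = (\<Sum>a<n. w1 * b1 * (w1^2 * b1^2) ^ a) * (\<Sum>j\<le>n. (w2^2 * b2^2) ^ j)"
    by (rule sum_product[symmetric])
  finally show ?thesis
    by (simp add: fpoly_def sum_distrib_left lessThan_Suc_atMost mult.assoc)
qed

lemma sum_Wset_row:
  fixes f :: "int \<times> int \<Rightarrow> 'a :: semiring_1"
  assumes "m \<le> n"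
  shows "(\<Sum>x\<in>Wset n. of_bool (snd x = 2 * int m) * f x) = (\<Sum>a<n. f (2 * int a + 1, 2 * int m))"
  using assms by (simp add: sum_Wset)

lemma sum_Bset_column:
  fixes f :: "int \<times> int \<Rightarrow> 'a :: semiring_1"
  assumes "m \<le> n"
  shows "(\<Sum>y\<in>Bset n. of_bool (fst y = 2 * int m) * f y) = (\<Sum>j<n. f (2 * int m, 2 * int j + 1))"
  using assms by (simp add: sum_Bset flip: sum_distrib_left)

lemma sum_Bset_column_mon:
  assumes "m \<le> n"
  shows "(\<Sum>y\<in>Bset n. mon w1 w2 y * col_mon m b1 b2 y) = (w1^2 * b1^2) ^ m * (w2 * b2 * fpoly n (w2^2 * b2^2))"
proof -
  have "(\<Sum>y\<in>Bset n. mon w1 w2 y * col_mon m b1 b2 y)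
      = (\<Sum>j<n. (w1^2 * b1^2) ^ m * (w2 * b2 * (w2^2 * b2^2) ^ j))"
    using sum_Bset_column[OF assms, of "\<lambda>y. mon w1 w2 y * mon b1 b2 y"]
    by (simp add: col_mon_def mult.left_commute mon_def nat_add_distrib nat_mult_distrib power_add power_mult_distrib mult_ac)
      (simp add: mult.commute flip: power_mult)
  then show ?thesis
    by (simp add: fpoly_def sum_distrib_left)
qed

lemma sum_odd_upto:
  "(\<Sum>x\<in>{x::int. odd x \<and> 1 \<le> x \<and> x \<le> 2 * int n - 1}. f x) = (\<Sum>a<n. f (2 * int a + 1))"
proof -
  have "{x::int. odd x \<and> 1 \<le> x \<and> x \<le> 2 * int n - 1} = (\<lambda>a. 2 * int a + 1) ` {..<n}"
  proof (intro Set.set_eqI iffI)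
    fix x :: int assume "x \<in> {x. odd x \<and> 1 \<le> x \<and> x \<le> 2 * int n - 1}"
    then obtain a where "x = 2 * a + 1" "0 \<le> a" "a < int n" by (auto elim!: oddE)
    then show "x \<in> (\<lambda>a. 2 * int a + 1) ` {..<n}"
      by (intro image_eqI[of _ _ "nat a"]) auto
  qed auto
  then show ?thesis
    by (simp add: sum.reindex inj_on_def)
qed

lemma Gn_eq_Kinv_form: "Gn n w1 w2 b1 b2 = Kinv_form n (mon w1 w2) (mon b1 b2)"
  by (simp add: Gn_def Kinv_form_def mon_def mult_ac)

lemma Hn_eq_Kinv_form:
  assumes "k \<le> 1" "l \<le> 1"
  shows "Hn n k l w1 w2 b1 b2 = Kinv_form n (row_mon (n * k) w1 w2) (col_mon (n * l) b1 b2)"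
proof -
  have k: "n * k \<le> n" and l: "n * l \<le> n" using assms by (simp_all add: mult_le_cancel1)
  have "Kinv_form n (row_mon (n * k) w1 w2) (col_mon (n * l) b1 b2)
    = (\<Sum>x\<in>Wset n. of_bool (snd x = 2 * int (n * k)) *
        (\<Sum>y\<in>Bset n. of_bool (fst y = 2 * int (n * l)) * (mon w1 w2 x * Kinv n x y * mon b1 b2 y)))"
    unfolding Kinv_form_def row_mon_def col_mon_def
    by (intro sum.cong refl) (simp add: sum_distrib_left mult_ac)
  also have "\<dots> = (\<Sum>a<n. \<Sum>j<n. mon w1 w2 (2 * int a + 1, 2 * int (n * k))
        * Kinv n (2 * int a + 1, 2 * int (n * k)) (2 * int (n * l), 2 * int j + 1)
        * mon b1 b2 (2 * int (n * l), 2 * int j + 1))"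
    by (simp only: sum_Wset_row[OF k] sum_Bset_column[OF l])
  also have "\<dots> = Hn n k l w1 w2 b1 b2"
    unfolding Hn_def sum_odd_upto by (simp add: mon_def nat_mult_distrib mult_ac)
  finally show ?thesis ..
qed

lemma Kinv_form_mon_mon:
  "Cfun b1 b2 * Kinv_form n (mon w1 w2) (mon b1 b2)
    - (1 + \<i> * b2^2) * Kinv_form n (mon w1 w2) (col_mon 0 b1 b2)
    - (b1^2 * b2^2 + \<i> * b1^2) * Kinv_form n (mon w1 w2) (col_mon n b1 b2)
   = b1 * b2 * (w1 * b1 * fpoly n (w1^2 * b1^2) * (fpoly n (w2^2 * b2^2) + (w2^2 * b2^2) ^ n))"
  using Kinv_form_mon_right[of b1 b2 n "mon w1 w2"] by (simp add: sum_Wset_mon_mon fpoly_Suc)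

lemma Kinv_form_mon_col_mon:
  assumes "m \<le> n"
  shows "Cfun w1 w2 * Kinv_form n (mon w1 w2) (col_mon m b1 b2)
    - (1 + \<i> * w1^2) * Kinv_form n (row_mon 0 w1 w2) (col_mon m b1 b2)
    - (w1^2 * w2^2 + \<i> * w2^2) * Kinv_form n (row_mon n w1 w2) (col_mon m b1 b2)
   = w1 * w2 * ((w1^2 * b1^2) ^ m * (w2 * b2 * fpoly n (w2^2 * b2^2)))"
  using Kinv_form_mon_left[of w1 w2 n "col_mon m b1 b2"] sum_Bset_column_mon[OF assms] by simp

lemma boundary_elimination:
  fixes w1 w2 b1 b2 F U T V G L0 L2 H00 H01 H10 H11 :: complex
  assumes Cw: "Cfun w1 w2 \<noteq> 0" and Cb: "Cfun b1 b2 \<noteq> 0"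
    and T: "T = 1 - (1 - w1^2 * b1^2) * F" and V: "V = 1 - (1 - w2^2 * b2^2) * U"
    and E1: "Cfun b1 b2 * G - (1 + \<i> * b2^2) * L0 - (b1^2 * b2^2 + \<i> * b1^2) * L2 = b1 * b2 * (w1 * b1 * F * (U + V))"
    and E2: "Cfun w1 w2 * L0 - (1 + \<i> * w1^2) * H00 - (w1^2 * w2^2 + \<i> * w2^2) * H10 = w1 * w2 * (w2 * b2 * U)"
    and E3: "Cfun w1 w2 * L2 - (1 + \<i> * w1^2) * H01 - (w1^2 * w2^2 + \<i> * w2^2) * H11 = w1 * w2 * (T * (w2 * b2 * U))"
  shows "G = w1 * w2^2 * b2 * (F + T) * U / Cfun w1 w2
    + (1 + \<i> * w1^2) * ((1 + \<i> * b2^2) * H00 + b1^2 * (b2 * w1 * F + (\<i> + b2^2) * H01)) / (Cfun w1 w2 * Cfun b1 b2)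
    + (\<i> + w1^2) * w2^2 * (b1^2 * (b2 * V) * w1 * F + (1 + \<i> * b2^2) * H10 + b1^2 * (\<i> + b2^2) * H11)
      / (Cfun w1 w2 * Cfun b1 b2)"
    (is "G = ?X / _ + ?Y / _ + ?Z / _")
proof -
  let ?Aw = "1 + \<i> * w1^2" and ?Bw = "w1^2 * w2^2 + \<i> * w2^2"
    and ?Ab = "1 + \<i> * b2^2" and ?Bb = "b1^2 * b2^2 + \<i> * b1^2"
  have e1: "Cfun b1 b2 * G = b1 * b2 * (w1 * b1 * F * (U + V)) + ?Ab * L0 + ?Bb * L2"
    by (simp add: E1[symmetric])
  have e2: "Cfun w1 w2 * L0 = w1 * w2 * (w2 * b2 * U) + ?Aw * H00 + ?Bw * H10"
    by (simp add: E2[symmetric])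
  have e3: "Cfun w1 w2 * L2 = w1 * w2 * (T * (w2 * b2 * U)) + ?Aw * H01 + ?Bw * H11"
    by (simp add: E3[symmetric])
  have "Cfun w1 w2 * Cfun b1 b2 * G
      = Cfun w1 w2 * (b1 * b2 * (w1 * b1 * F * (U + V))) + ?Ab * (Cfun w1 w2 * L0) + ?Bb * (Cfun w1 w2 * L2)"
    unfolding mult.assoc e1 by (simp add: algebra_simps)
  also have "\<dots> = Cfun w1 w2 * (b1 * b2 * (w1 * b1 * F * (U + V)))
      + ?Ab * (w1 * w2 * (w2 * b2 * U) + ?Aw * H00 + ?Bw * H10)
      + ?Bb * (w1 * w2 * (T * (w2 * b2 * U)) + ?Aw * H01 + ?Bw * H11)"
    by (simp only: e2 e3)
  also have "\<dots> = ?X * Cfun b1 b2 + ?Y + ?Z"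
    unfolding T V by (simp add: Cfun_def algebra_simps power2_eq_square)
  also have "\<dots> = Cfun w1 w2 * Cfun b1 b2 * (?X / Cfun w1 w2 + ?Y / (Cfun w1 w2 * Cfun b1 b2)
      + ?Z / (Cfun w1 w2 * Cfun b1 b2))"
    using Cw Cb by (simp add: field_simps)
  finally show ?thesis
    using Cw Cb by simp
qed

theorem lemma3p3:
  fixes n :: nat and w1 w2 b1 b2 :: complex
  assumes "n \<ge> 1"
    and "Cfun w1 w2 \<noteq> 0" and "Cfun b1 b2 \<noteq> 0"
  shows "Gn n w1 w2 b1 b2 =
      w1 * w2^2 * b2 * fpoly (n + 1) (w1^2 * b1^2) * fpoly n (w2^2 * b2^2) / Cfun w1 w2
    + (1 + \<i> * w1^2) *
        ((1 + \<i> * b2^2) * Hn n 0 0 w1 w2 b1 b2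
         + b1^2 * (b2 * w1 * fpoly n (b1^2 * w1^2) + (\<i> + b2^2) * Hn n 0 1 w1 w2 b1 b2))
        / (Cfun w1 w2 * Cfun b1 b2)
    + (\<i> + w1^2) * w2^2 *
        (b1^2 * b2^(2*n+1) * w1 * w2^(2*n) * fpoly n (b1^2 * w1^2)
         + (1 + \<i> * b2^2) * Hn n 1 0 w1 w2 b1 b2
         + b1^2 * (\<i> + b2^2) * Hn n 1 1 w1 w2 b1 b2)
        / (Cfun w1 w2 * Cfun b1 b2)"
proof -
  note G = boundary_elimination[OF assms(2,3) power_eq_one_minus_fpoly power_eq_one_minus_fpoly
      Kinv_form_mon_mon Kinv_form_mon_col_mon[of 0 n, simplified] Kinv_form_mon_col_mon[OF order.refl]]
  have "fpoly (n + 1) (w1^2 * b1^2) = fpoly n (w1^2 * b1^2) + (w1^2 * b1^2) ^ n"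
    by (simp add: fpoly_Suc)
  moreover have "b1^2 * b2^(2*n+1) * w1 * w2^(2*n) * fpoly n (b1^2 * w1^2)
      = b1^2 * (b2 * (w2^2 * b2^2) ^ n) * w1 * fpoly n (w1^2 * b1^2)"
    by (simp add: power_add power_mult_distrib mult_ac flip: power_mult)
  moreover have "fpoly n (b1^2 * w1^2) = fpoly n (w1^2 * b1^2)"
    by (simp add: mult.commute)
  ultimately show ?thesis
    using Hn_eq_Kinv_form[of 0 0] Hn_eq_Kinv_form[of 0 1] Hn_eq_Kinv_form[of 1 0] Hn_eq_Kinv_form[of 1 1]
    by (simp only: Gn_eq_Kinv_form G) simp
qed

end
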